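(* Let $F$ be a Banach lattice, $H\subset F$ a subspace and $0<r\le1$. Then $H$ contains no pair $e,f$ of unit vectors with $\||e|\wedge|f|\|<r$ if and only if $H$ has the $\frac1r$-SPR property, i.e. $\min(\|g+h\|,\|g-h\|)\le\frac1r\,\||g|-|h|\|$ for all $g,h\in H$.
   Context: For $s\ge1$, a subspace $H$ of a Banach lattice has the $s$-stable phase retrieval ($s$-SPR) property if $\|g+h\|\wedge\|g-h\|\le s\,\||g|-|h|\|$ for all $g,h\in H$. *)

theory Defs
  imports "HOL-Analysis.Analysis"
begin

definition labs :: "'a::{lattice, uminus} \<Rightarrow> 'a" where
  "labs x = sup x (- x)"

class banach_lattice = banach + ordered_real_vector + lattice +
  assumes norm_lattice_mono: "sup x (- x) \<le> sup y (- y) \<Longrightarrow> norm x \<le> norm y"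

definition SPR :: "real \<Rightarrow> 'a::banach_lattice set \<Rightarrow> bool" where
  "SPR s H \<longleftrightarrow> (\<forall>g\<in>H. \<forall>h\<in>H.
      min (norm (g + h)) (norm (g - h)) \<le> s * norm (labs g - labs h))"

end

theory Submission
  imports Defs "HOL-Library.Lattice_Algebras"
begin

text \<open>In every vector lattice \<open>||g| - |h|| = |g + h| \<sqinter> |g - h|\<close>. Hence, writing
  \<open>x = g + h\<close> and \<open>y = g - h\<close>, the \<open>s\<close>-SPR inequality for \<open>g, h\<close> reads
  \<open>min \<parallel>x\<parallel> \<parallel>y\<parallel> \<le> s \<parallel>|x| \<sqinter> |y|\<parallel>\<close>. Since \<open>(g, h) \<mapsto> (g + h, g - h)\<close> is a bijection of
  \<open>H \<times> H\<close>, and the inequality for \<open>x, y\<close> follows from the one for their normalisations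
  (scaling down the larger of the two only decreases \<open>|x| \<sqinter> |y|\<close>), \<open>(1/r)\<close>-SPR is
  equivalent to \<open>\<parallel>|e| \<sqinter> |f|\<parallel> \<ge> r\<close> for all unit vectors \<open>e, f \<in> H\<close>.\<close>

class vector_lattice = ordered_real_vector + lattice

subclass (in vector_lattice) lattice_ab_group_add ..

subclass (in banach_lattice) vector_lattice ..

lemma labs_nonneg: "0 \<le> labs (x::'a::lattice_ab_group_add)"
proof -
  have "x + - x \<le> labs x + labs x"
    unfolding labs_def by (intro add_mono) auto
  thus ?thesis by simp
qed

lemma labs_of_nonneg: "0 \<le> (x::'a::lattice_ab_group_add) \<Longrightarrow> labs x = x"
  unfolding labs_def by (metis minus_le_self_iff sup.absorb1)

lemma labs_labs [simp]: "labs (labs (x::'a::lattice_ab_group_add)) = labs x"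
  by (rule labs_of_nonneg[OF labs_nonneg])

lemma sup_labs_add_labs_diff:
  fixes x y :: "'a::lattice_ab_group_add"
  shows "sup (labs (x + y)) (labs (x - y)) = labs x + labs y"
proof -
  have "labs x + labs y = sup (sup (x + y) (- x + y)) (sup (x + - y) (- x + - y))"
    unfolding labs_def by (simp only: add_sup_distrib_left add_sup_distrib_right)
  also have "\<dots> = sup (sup (x + y) (- x + - y)) (sup (x + - y) (- x + - (- y)))"
    by (intro order.antisym) (simp_all add: le_supI1 le_supI2)
  also have "\<dots> = sup (labs (x + y)) (labs (x - y))"
    by (simp only: labs_def minus_add_distrib diff_conv_add_uminus)
  finally show ?thesis by simp
qed

lemma labs_diff_eq_sup_diff_inf:
  fixes p q :: "'a::lattice_ab_group_add"
  shows "labs (p - q) = sup p q - inf p q"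
proof -
  have "sup p q - inf p q = sup (sup (p + - p) (q + - p)) (sup (p + - q) (q + - q))"
    by (simp only: diff_inf_eq_sup add_sup_distrib_left add_sup_distrib_right)
  also have "\<dots> = sup 0 (labs (p - q))"
    unfolding labs_def by (simp add: sup_aci algebra_simps)
  also have "\<dots> = labs (p - q)"
    by (rule sup.absorb2[OF labs_nonneg])
  finally show ?thesis by simp
qed

lemma sup_scaleR_le:
  fixes a b :: "'a::vector_lattice"
  assumes "0 \<le> c"
  shows "sup (c *\<^sub>R a) (c *\<^sub>R b) \<le> c *\<^sub>R sup a b"
  using assms by (intro sup_least scaleR_left_mono) simp_all

lemma scaleR_inf_le:
  fixes a b :: "'a::vector_lattice"
  assumes "0 \<le> c"
  shows "c *\<^sub>R inf a b \<le> inf (c *\<^sub>R a) (c *\<^sub>R b)"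
  using assms by (intro inf_greatest scaleR_left_mono) simp_all

lemma sup_scaleR_pos:
  fixes a b :: "'a::vector_lattice"
  assumes "0 < c"
  shows "sup (c *\<^sub>R a) (c *\<^sub>R b) = c *\<^sub>R sup a b"
proof (rule order.antisym)
  show "sup (c *\<^sub>R a) (c *\<^sub>R b) \<le> c *\<^sub>R sup a b"
    using assms by (intro sup_scaleR_le) simp
  have "sup a b = sup (inverse c *\<^sub>R (c *\<^sub>R a)) (inverse c *\<^sub>R (c *\<^sub>R b))"
    using assms by simp
  also have "\<dots> \<le> inverse c *\<^sub>R sup (c *\<^sub>R a) (c *\<^sub>R b)"
    using assms by (intro sup_scaleR_le) simp
  finally have "c *\<^sub>R sup a b \<le> c *\<^sub>R (inverse c *\<^sub>R sup (c *\<^sub>R a) (c *\<^sub>R b))"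
    using assms by (intro scaleR_left_mono) simp_all
  thus "c *\<^sub>R sup a b \<le> sup (c *\<^sub>R a) (c *\<^sub>R b)"
    using assms by simp
qed

lemma labs_scaleR_pos: "0 < c \<Longrightarrow> labs (c *\<^sub>R x) = c *\<^sub>R labs (x::'a::vector_lattice)"
  unfolding labs_def using sup_scaleR_pos[of c x "- x"] by simp

text \<open>Both sides are computed from \<open>|x + y| \<squnion> |x - y| = |x| + |y|\<close>, applied to \<open>x, y\<close>
  and to \<open>x + y, x - y\<close>, together with \<open>u + v = u \<squnion> v + u \<sqinter> v\<close>.\<close>

lemma labs_diff_labs:
  fixes x y :: "'a::vector_lattice"
  shows "labs (labs x - labs y) = inf (labs (x + y)) (labs (x - y))"
proof -
  define a b P Q where "a = labs (x + y)" and "b = labs (x - y)"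
    and "P = labs x" and "Q = labs y"
  have sup_ab: "sup a b = P + Q"
    unfolding a_def b_def P_def Q_def by (rule sup_labs_add_labs_diff)
  have "sup (labs ((x + y) + (x - y))) (labs ((x + y) - (x - y))) = a + b"
    unfolding a_def b_def by (rule sup_labs_add_labs_diff)
  moreover have "(x + y) + (x - y) = 2 *\<^sub>R x" "(x + y) - (x - y) = 2 *\<^sub>R y"
    by (simp_all add: scaleR_2 algebra_simps)
  ultimately have sum_ab: "a + b = 2 *\<^sub>R sup P Q"
    unfolding P_def Q_def by (simp add: labs_scaleR_pos sup_scaleR_pos)
  have "inf a b = (a + b) - sup a b"
    by (metis add_eq_inf_sup add_diff_cancel_left')
  also have "\<dots> = 2 *\<^sub>R sup P Q - (sup P Q + inf P Q)"
    by (simp only: sum_ab sup_ab add_eq_inf_sup[of P Q])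
  also have "\<dots> = labs (P - Q)"
    by (simp add: labs_diff_eq_sup_diff_inf scaleR_2 algebra_simps)
  finally show ?thesis
    unfolding a_def b_def P_def Q_def by simp
qed

lemma norm_labs [simp]: "norm (labs x) = norm (x::'a::banach_lattice)"
proof -
  have "sup (labs x) (- labs x) = sup x (- x)"
    using labs_labs[of x] by (simp only: labs_def)
  then show ?thesis
    using norm_lattice_mono[of "labs x" x] norm_lattice_mono[of x "labs x"] by simp
qed

lemma norm_mono_nonneg:
  fixes x y :: "'a::banach_lattice"
  assumes "0 \<le> x" and "x \<le> y"
  shows "norm x \<le> norm y"
  using assms norm_lattice_mono[of x y] labs_of_nonneg[of x] labs_of_nonneg[of y]
  unfolding labs_def by auto

lemma norm_labs_diff_labs:
  "norm (labs x - labs y) = norm (inf (labs (x + y)) (labs (x - y :: 'a::banach_lattice)))"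
  by (metis norm_labs labs_diff_labs)

lemma scaleR_labs_sgn_le:
  fixes x :: "'a::banach_lattice"
  assumes "0 \<le> c" and "c \<le> norm x"
  shows "c *\<^sub>R labs (sgn x) \<le> labs x"
proof (cases "x = 0")
  case False
  have "c *\<^sub>R labs (sgn x) = (c / norm x) *\<^sub>R labs x"
    using False by (simp add: sgn_div_norm labs_scaleR_pos divide_inverse)
  also have "\<dots> \<le> labs x"
    using assms False by (intro scaleR_left_le_one_le labs_nonneg) (simp_all add: divide_le_eq_1)
  finally show ?thesis .
qed (use assms labs_nonneg in simp)

lemma min_norm_mult_norm_inf_labs_sgn_le:
  fixes x y :: "'a::banach_lattice"
  shows "min (norm x) (norm y) * norm (inf (labs (sgn x)) (labs (sgn y)))
    \<le> norm (inf (labs x) (labs y))"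
proof -
  define m where "m = min (norm x) (norm y)"
  have "0 \<le> m" "m \<le> norm x" "m \<le> norm y"
    by (simp_all add: m_def)
  then have "m *\<^sub>R inf (labs (sgn x)) (labs (sgn y)) \<le> inf (labs x) (labs y)"
    by (meson scaleR_inf_le scaleR_labs_sgn_le inf_mono order.trans)
  moreover have "0 \<le> m *\<^sub>R inf (labs (sgn x)) (labs (sgn y))"
    using \<open>0 \<le> m\<close> by (simp add: labs_nonneg scaleR_nonneg_nonneg)
  ultimately show ?thesis
    using \<open>0 \<le> m\<close> norm_mono_nonneg by (fastforce simp: m_def)
qed

lemma SPR_if_norm_inf_labs_unit_ge:
  fixes H :: "'a::banach_lattice set"
  assumes "subspace H" and "0 < r"
    and unit_ge: "\<And>e f. e \<in> H \<Longrightarrow> f \<in> H \<Longrightarrow> norm e = 1 \<Longrightarrow> norm f = 1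
      \<Longrightarrow> r \<le> norm (inf (labs e) (labs f))"
  shows "SPR (1 / r) H"
  unfolding SPR_def
proof (intro ballI)
  fix g h assume "g \<in> H" "h \<in> H"
  define x y where "x = g + h" and "y = g - h"
  have "x \<in> H" "y \<in> H"
    unfolding x_def y_def using assms(1) \<open>g \<in> H\<close> \<open>h \<in> H\<close>
    by (simp_all add: subspace_add subspace_diff)
  have "min (norm x) (norm y) * r \<le> norm (labs g - labs h)"
  proof (cases "x = 0 \<or> y = 0")
    case False
    then have "r \<le> norm (inf (labs (sgn x)) (labs (sgn y)))"
      using assms(1) \<open>x \<in> H\<close> \<open>y \<in> H\<close>
      by (intro unit_ge) (simp_all add: sgn_div_norm subspace_scale norm_sgn)
    then have "min (norm x) (norm y) * r
        \<le> min (norm x) (norm y) * norm (inf (labs (sgn x)) (labs (sgn y)))"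
      by (rule mult_left_mono) simp
    also have "\<dots> \<le> norm (labs g - labs h)"
      unfolding norm_labs_diff_labs x_def y_def
      by (rule min_norm_mult_norm_inf_labs_sgn_le)
    finally show ?thesis .
  qed auto
  then show "min (norm (g + h)) (norm (g - h)) \<le> 1 / r * norm (labs g - labs h)"
    using \<open>0 < r\<close> by (simp add: x_def y_def field_simps)
qed

lemma norm_inf_labs_unit_ge_if_SPR:
  fixes H :: "'a::banach_lattice set"
  assumes "subspace H" and "0 < r" and "SPR (1 / r) H"
    and "e \<in> H" "f \<in> H" "norm e = 1" "norm f = 1"
  shows "r \<le> norm (inf (labs e) (labs f))"
proof -
  define g h where "g = (1/2::real) *\<^sub>R (e + f)" and "h = (1/2::real) *\<^sub>R (e - f)"
  have "g \<in> H" "h \<in> H"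
    unfolding g_def h_def using assms(1,4,5)
    by (simp_all add: subspace_scale subspace_add subspace_diff)
  have "g + h = e" "g - h = f"
    unfolding g_def h_def by (simp_all add: algebra_simps flip: scaleR_2)
  have "min (norm (g + h)) (norm (g - h)) \<le> 1 / r * norm (labs g - labs h)"
    using assms(3) \<open>g \<in> H\<close> \<open>h \<in> H\<close> unfolding SPR_def by blast
  then have "1 \<le> 1 / r * norm (inf (labs e) (labs f))"
    unfolding norm_labs_diff_labs \<open>g + h = e\<close> \<open>g - h = f\<close> using assms(6,7) by simp
  then show ?thesis
    using \<open>0 < r\<close> by (simp add: field_simps)
qed

theorem mainTheorem17:
  fixes H :: "'a::banach_lattice set" and r :: real
  assumes "subspace H" and "0 < r" and "r \<le> 1"
  shows "(\<not> (\<exists>e\<in>H. \<exists>f\<in>H. norm e = 1 \<and> norm f = 1 \<and> norm (inf (labs e) (labs f)) < r))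
         \<longleftrightarrow> SPR (1 / r) H"
proof
  assume "\<not> (\<exists>e\<in>H. \<exists>f\<in>H. norm e = 1 \<and> norm f = 1 \<and> norm (inf (labs e) (labs f)) < r)"
  then show "SPR (1 / r) H"
    using assms(1,2) by (intro SPR_if_norm_inf_labs_unit_ge) (auto simp: not_less)
next
  assume "SPR (1 / r) H"
  then show "\<not> (\<exists>e\<in>H. \<exists>f\<in>H. norm e = 1 \<and> norm f = 1 \<and> norm (inf (labs e) (labs f)) < r)"
    using assms(1,2) norm_inf_labs_unit_ge_if_SPR by (fastforce simp: not_less)
qed

end
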